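(* Let $\tilde L$ be a minimum-size counterexample. For every meet-irreducible element $m$ of $\tilde L$ there exists a join-irreducible element $j$ of $\tilde L$ such that $j\le m$ and $|{\uparrow}j|=\frac{|\tilde L|+1}{2}$.
   Context: For a poset $P$, $x$ upper covers $y$ (and $y$ lower covers $x$) if $y<x$ with nothing strictly between. Join-irreducible: upper covers exactly one element; meet-irreducible: lower covers exactly one element. For $x\in P$, ${\uparrow}x=\{y\in P: x\le y\}$. A counterexample is a finite lattice $L$ with $|L|>1$ in which every join-irreducible $j$ satisfies $|{\uparrow}j|>|L|/2$; a minimum-size counterexample is a counterexample $\tilde L$ such that no counterexample has fewer elements. *)

theory Defs
  imports Complex_Main "HOL-Algebra.Lattice"
begin

text \<open>Finite lattices are represented by HOL-Algebra's gorder records satisfying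
  the locale predicate lattice (where the equivalence is equality).\<close>

definition upper_covers :: "'a gorder \<Rightarrow> 'a \<Rightarrow> 'a \<Rightarrow> bool" where
  "upper_covers L x y \<longleftrightarrow> x \<in> carrier L \<and> y \<in> carrier L \<and> y \<sqsubset>\<^bsub>L\<^esub> x \<and>
     \<not> (\<exists>z \<in> carrier L. y \<sqsubset>\<^bsub>L\<^esub> z \<and> z \<sqsubset>\<^bsub>L\<^esub> x)"

definition join_irreducible :: "'a gorder \<Rightarrow> 'a \<Rightarrow> bool" where
  "join_irreducible L j \<longleftrightarrow> j \<in> carrier L \<and> card {y \<in> carrier L. upper_covers L j y} = 1"

definition meet_irreducible :: "'a gorder \<Rightarrow> 'a \<Rightarrow> bool" where
  "meet_irreducible L m \<longleftrightarrow> m \<in> carrier L \<and> card {y \<in> carrier L. upper_covers L y m} = 1"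

definition up_set :: "'a gorder \<Rightarrow> 'a \<Rightarrow> 'a set" where
  "up_set L x = {y \<in> carrier L. x \<sqsubseteq>\<^bsub>L\<^esub> y}"

definition counterexample :: "'a gorder \<Rightarrow> bool" where
  "counterexample L \<longleftrightarrow> lattice L \<and> finite (carrier L) \<and> card (carrier L) > 1 \<and>
     (\<forall>j. join_irreducible L j \<longrightarrow> real (card (up_set L j)) > real (card (carrier L)) / 2)"

text \<open>Minimality is measured against all counterexamples; every finite lattice is
  isomorphic to one carried by a set of naturals, so quantifying over nat-carried
  lattices covers all finite lattices.\<close>
definition min_counterexample :: "'a gorder \<Rightarrow> bool" where
  "min_counterexample L \<longleftrightarrow> counterexample L \<and>
     (\<forall>L' :: nat gorder. counterexample L' \<longrightarrow> card (carrier L) \<le> card (carrier L'))"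

end

theory Submission
  imports Defs
begin

text \<open>Let \<open>n = |L|\<close> and let \<open>m'\<close> be the unique upper cover of the meet-irreducible \<open>m\<close>.
  Deleting \<open>m\<close> leaves a lattice (a join equal to \<open>m\<close> becomes \<open>m'\<close>), which by minimality is
  not a counterexample: it has a join-irreducible \<open>j\<close> with \<open>|\<up>j - {m}| \<le> (n - 1)/2\<close>.
  Deleting \<open>m\<close> changes lower covers only at \<open>m'\<close>. If \<open>j \<noteq> m'\<close>, then \<open>j\<close> is join-irreducible
  in \<open>L\<close>, so \<open>|\<up>j| > n/2\<close> forces \<open>m \<in> \<up>j\<close> and \<open>|\<up>j| = (n + 1)/2\<close>. If \<open>j = m'\<close>, the same
  count shows that \<open>m'\<close> is not join-irreducible in \<open>L\<close>, so it has a lower cover \<open>c \<noteq> m\<close>, its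
  only lower cover once \<open>m\<close> is gone. Then every lower cover of \<open>m\<close> lies below \<open>c\<close> while \<open>m\<close>
  does not, so \<open>m\<close> is join-irreducible, and \<open>\<up>m = {m} \<union> \<up>m'\<close> gives \<open>|\<up>m| = (n + 1)/2\<close>.\<close>

lemma latticeI:
  fixes L :: "('a, 'b) gorder_scheme"
  assumes "eq L = (=)"
    and "\<And>x. x \<in> carrier L \<Longrightarrow> x \<sqsubseteq>\<^bsub>L\<^esub> x"
    and "\<And>x y. x \<in> carrier L \<Longrightarrow> y \<in> carrier L \<Longrightarrow> x \<sqsubseteq>\<^bsub>L\<^esub> y \<Longrightarrow> y \<sqsubseteq>\<^bsub>L\<^esub> x \<Longrightarrow> x = y"
    and "\<And>x y z. x \<in> carrier L \<Longrightarrow> y \<in> carrier L \<Longrightarrow> z \<in> carrier L \<Longrightarrow>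
           x \<sqsubseteq>\<^bsub>L\<^esub> y \<Longrightarrow> y \<sqsubseteq>\<^bsub>L\<^esub> z \<Longrightarrow> x \<sqsubseteq>\<^bsub>L\<^esub> z"
    and "\<And>x y. x \<in> carrier L \<Longrightarrow> y \<in> carrier L \<Longrightarrow> \<exists>s. is_lub L s {x, y}"
    and "\<And>x y. x \<in> carrier L \<Longrightarrow> y \<in> carrier L \<Longrightarrow> \<exists>i. is_glb L i {x, y}"
  shows "lattice L"
  by unfold_locales (simp_all add: assms(1), (use assms(2-6) in blast)+)

lemma lless_carrier_update [simp]: "lless (L\<lparr>carrier := A\<rparr>) = lless L"
  by (simp add: lless_def fun_eq_iff)

locale finite_partial_order = partial_order L for L :: "'a gorder" (structure) +
  assumes finite_carrier: "finite (carrier L)"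
begin

lemma upper_covers_inv_gorder:
  "upper_covers (inv_gorder L) x y \<longleftrightarrow> upper_covers L y x"
  by (auto simp: upper_covers_def lless_def eq_is_equal)

lemma exists_lower_cover:
  assumes z: "z \<in> carrier L" and x: "x \<in> carrier L" and "z \<sqsubset> x"
  shows "\<exists>w. upper_covers L x w \<and> z \<sqsubseteq> w"
proof -
  let ?A = "{w \<in> carrier L. z \<sqsubseteq> w \<and> w \<sqsubset> x}"
  \<comment> \<open>an element of \<open>?A\<close> with the smallest up-set is maximal in \<open>?A\<close>\<close>
  obtain w where w: "w \<in> ?A" and least: "\<And>v. v \<in> ?A \<Longrightarrow> card (up_set L w) \<le> card (up_set L v)"
    using ex_has_least_nat[of "\<lambda>w. w \<in> ?A" z "\<lambda>w. card (up_set L w)"] z \<open>z \<sqsubset> x\<close> by auto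
  have "\<not> (w \<sqsubset> v \<and> v \<sqsubset> x)" if v: "v \<in> carrier L" for v
  proof
    assume wvx: "w \<sqsubset> v \<and> v \<sqsubset> x"
    have "up_set L v \<subset> up_set L w"
      using wvx v w by (auto simp: up_set_def lless_eq intro: le_trans)
    then have "card (up_set L v) < card (up_set L w)"
      using finite_carrier by (auto simp: up_set_def intro: psubset_card_mono)
    moreover have "v \<in> ?A" using v w wvx z by (auto simp: lless_eq intro: le_trans)
    ultimately show False using least by fastforce
  qed
  then show ?thesis using w x by (auto simp: upper_covers_def)
qed

lemma exists_upper_cover:
  assumes "z \<in> carrier L" and "x \<in> carrier L" and "z \<sqsubset> x"
  shows "\<exists>w. upper_covers L w z \<and> w \<sqsubseteq> x"
proof -
  interpret dual: finite_partial_order "inv_gorder L"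
    by (simp add: finite_partial_order_def finite_partial_order_axioms_def dual_order finite_carrier)
  obtain w where "upper_covers (inv_gorder L) z w" "x \<sqsubseteq>\<^bsub>inv_gorder L\<^esub> w"
    using dual.exists_lower_cover[of x z] assms by (auto simp: lless_def eq_is_equal)
  then show ?thesis unfolding upper_covers_inv_gorder by auto
qed

lemma meet_irreducible_upper_cover:
  assumes "meet_irreducible L m"
  obtains m' where "upper_covers L m' m" and "\<And>y. y \<in> carrier L \<Longrightarrow> m \<sqsubset> y \<Longrightarrow> m' \<sqsubseteq> y"
proof -
  obtain m' where m': "{y \<in> carrier L. upper_covers L y m} = {m'}"
    using assms unfolding meet_irreducible_def by (metis card_1_singletonE)
  have "m' \<sqsubseteq> y" if y: "y \<in> carrier L" "m \<sqsubset> y" for y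
  proof -
    obtain w where "upper_covers L w m" "w \<sqsubseteq> y"
      using exists_upper_cover[of m y] assms y by (auto simp: meet_irreducible_def)
    with m' show ?thesis by (auto simp: upper_covers_def)
  qed
  with m' that show ?thesis by blast
qed

end

lemma counterexample_order_iso:
  fixes L :: "'a gorder" and N :: "'b gorder"
  assumes ce: "counterexample L" and f: "bij_betw f (carrier L) (carrier N)"
    and eqN: "eq N = (=)"
    and le: "\<And>a b. a \<in> carrier L \<Longrightarrow> b \<in> carrier L \<Longrightarrow> f a \<sqsubseteq>\<^bsub>N\<^esub> f b \<longleftrightarrow> a \<sqsubseteq>\<^bsub>L\<^esub> b"
  shows "counterexample N"
proof -
  interpret lattice L using ce by (simp add: counterexample_def)
  have N: "carrier N = f ` carrier L" and inj: "inj_on f (carrier L)"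
    using f by (auto simp: bij_betw_def)
  have lattice_N: "lattice N"
  proof (rule latticeI)
    fix x y assume "x \<in> carrier N" "y \<in> carrier N"
    then obtain a b where ab: "a \<in> carrier L" "b \<in> carrier L" "x = f a" "y = f b"
      using N by auto
    show "\<exists>s. is_lub N s {x, y}"
      using ab N le by (intro exI[of _ "f (a \<squnion>\<^bsub>L\<^esub> b)"])
        (auto simp: least_def Upper_def join_le join_left join_right)
    show "\<exists>i. is_glb N i {x, y}"
      using ab N le by (intro exI[of _ "f (a \<sqinter>\<^bsub>L\<^esub> b)"])
        (auto simp: greatest_def Lower_def meet_le meet_left meet_right)
  qed (use N le eqN in \<open>auto intro: le_trans dest: le_antisym\<close>)
  have lless: "f a \<sqsubset>\<^bsub>N\<^esub> f b \<longleftrightarrow> a \<sqsubset>\<^bsub>L\<^esub> b" if "a \<in> carrier L" "b \<in> carrier L" for a b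
    using that le inj eqN by (auto simp: lless_def eq_is_equal inj_on_eq_iff)
  have covers: "{y \<in> carrier N. upper_covers N (f a) y} = f ` {y \<in> carrier L. upper_covers L a y}"
    if "a \<in> carrier L" for a
    using that N lless by (auto simp: upper_covers_def)
  have up: "up_set N (f a) = f ` up_set L a" if "a \<in> carrier L" for a
    using that N le by (auto simp: up_set_def)
  have card: "card (f ` A) = card A" if "A \<subseteq> carrier L" for A
    using inj that by (meson card_image inj_on_subset)
  have card_carrier: "card (carrier N) = card (carrier L)"
    using N card by simp
  show ?thesis
    unfolding counterexample_def
  proof (intro conjI allI impI)
    fix j assume "join_irreducible N j"
    then obtain a where a: "a \<in> carrier L" "j = f a"
      and "card {y \<in> carrier N. upper_covers N (f a) y} = 1"
      using N by (auto simp: join_irreducible_def)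
    then have "join_irreducible L a"
      using covers card by (simp add: join_irreducible_def)
    then show "real (card (up_set N j)) > real (card (carrier N)) / 2"
      using ce a up card card_carrier by (simp add: counterexample_def up_set_def)
  qed (use ce lattice_N N card_carrier in \<open>simp_all add: counterexample_def\<close>)
qed

lemma min_counterexample_card_le:
  fixes L :: "'a gorder" and L' :: "'b gorder"
  assumes "min_counterexample L" and ce: "counterexample L'"
  shows "card (carrier L) \<le> card (carrier L')"
proof -
  \<comment> \<open>minimality only refers to lattices carried by \<open>nat\<close>, so transport \<open>L'\<close> onto \<open>{0..<card (carrier L')}\<close>\<close>
  let ?k = "card (carrier L')"
  obtain f :: "'b \<Rightarrow> nat" where f: "bij_betw f (carrier L') {0..<?k}"
    using ex_bij_betw_finite_nat ce by (auto simp: counterexample_def)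
  let ?g = "inv_into (carrier L') f"
  let ?N = "\<lparr>carrier = {0..<?k}, eq = (=), le = \<lambda>x y. ?g x \<sqsubseteq>\<^bsub>L'\<^esub> ?g y\<rparr> :: nat gorder"
  have "counterexample ?N"
    using counterexample_order_iso[OF ce, of f ?N] f by (simp add: bij_betw_inv_into_left)
  then show ?thesis
    using assms(1) by (auto simp: min_counterexample_def)
qed

lemma counterexample_up_set_card_eq:
  assumes ce: "counterexample L" and j: "join_irreducible L j"
    and small: "2 * card (up_set L j - {m}) < card (carrier L)"
  shows "j \<sqsubseteq>\<^bsub>L\<^esub> m \<and> real (card (up_set L j)) = (real (card (carrier L)) + 1) / 2"
proof -
  have "real (card (carrier L)) / 2 < real (card (up_set L j))"
    using ce j by (simp add: counterexample_def)
  then have big: "card (carrier L) < 2 * card (up_set L j)"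
    by linarith
  have "m \<in> up_set L j"
  proof (rule ccontr)
    assume "m \<notin> up_set L j"
    then have "up_set L j - {m} = up_set L j" by simp
    with big small show False by simp
  qed
  moreover have "finite (up_set L j)"
    using ce by (simp add: counterexample_def up_set_def)
  ultimately have "card (up_set L j) = card (up_set L j - {m}) + 1"
    by (metis card_Suc_Diff1 Suc_eq_plus1)
  then have "2 * card (up_set L j) = card (carrier L) + 1"
    using big small by linarith
  then have "real (2 * card (up_set L j)) = real (card (carrier L) + 1)"
    by (simp only:)
  then have "real (card (up_set L j)) = (real (card (carrier L)) + 1) / 2"
    by simp
  with \<open>m \<in> up_set L j\<close> show ?thesis
    by (simp add: up_set_def)
qed

locale meet_irreducible_element = lattice L + finite_partial_order L for L :: "'a gorder" (structure) +
  fixes m m' :: 'a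
  assumes upper_cover: "upper_covers L m' m"
    and upper_cover_le: "\<And>y. y \<in> carrier L \<Longrightarrow> m \<sqsubset> y \<Longrightarrow> m' \<sqsubseteq> y"
begin

lemma m_in_carrier: "m \<in> carrier L" and m'_in_carrier: "m' \<in> carrier L" and m_less_m': "m \<sqsubset> m'"
  using upper_cover by (auto simp: upper_covers_def)

lemma not_m'_le_m: "\<not> m' \<sqsubseteq> m"
  using m_less_m' m_in_carrier m'_in_carrier by (auto simp: lless_eq)

lemma up_set_m: "up_set L m = insert m (up_set L m')"
  using upper_cover_le m_less_m' m_in_carrier m'_in_carrier
  by (auto simp: up_set_def lless_eq intro: le_trans)

lemma lattice_remove: "lattice (L\<lparr>carrier := carrier L - {m}\<rparr>)"
proof (rule latticeI)
  fix x y
  assume "x \<in> carrier (L\<lparr>carrier := carrier L - {m}\<rparr>)" "y \<in> carrier (L\<lparr>carrier := carrier L - {m}\<rparr>)"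
  then have x: "x \<in> carrier L" "x \<noteq> m" and y: "y \<in> carrier L" "y \<noteq> m" by auto
  show "\<exists>s. is_lub (L\<lparr>carrier := carrier L - {m}\<rparr>) s {x, y}"
  proof (cases "x \<squnion> y = m")
    case True
    have "m' \<sqsubseteq> u" if "u \<in> carrier L" "u \<noteq> m" "x \<sqsubseteq> u" "y \<sqsubseteq> u" for u
      using that True x y join_le[of x u y] upper_cover_le by (auto simp: lless_eq)
    moreover have "x \<sqsubseteq> m'" "y \<sqsubseteq> m'"
      using True x y join_left join_right m_less_m' m'_in_carrier m_in_carrier
      by (metis lless_eq le_trans)+
    ultimately show ?thesis
      using x y m'_in_carrier m_less_m'
      by (intro exI[of _ m']) (auto simp: least_def Upper_def lless_eq)
  next
    case False
    then show ?thesis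
      using x y
      by (intro exI[of _ "x \<squnion> y"]) (auto simp: least_def Upper_def join_left join_right join_le)
  qed
  have "x \<sqinter> y \<noteq> m"
  proof
    assume "x \<sqinter> y = m"
    then have "m' \<sqsubseteq> x" "m' \<sqsubseteq> y"
      using x y meet_left meet_right upper_cover_le by (metis lless_eq)+
    then show False
      using x y \<open>x \<sqinter> y = m\<close> meet_le[of m' x y] not_m'_le_m m'_in_carrier by simp
  qed
  then show "\<exists>i. is_glb (L\<lparr>carrier := carrier L - {m}\<rparr>) i {x, y}"
    using x y
    by (intro exI[of _ "x \<sqinter> y"]) (auto simp: greatest_def Lower_def meet_left meet_right meet_le)
qed (auto intro: le_trans simp: eq_is_equal)

lemma upper_covers_remove_iff:
  assumes x: "x \<in> carrier L - {m}" "x \<noteq> m'" and y: "y \<in> carrier L - {m}"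
  shows "upper_covers (L\<lparr>carrier := carrier L - {m}\<rparr>) x y \<longleftrightarrow> upper_covers L x y"
proof
  assume cover: "upper_covers (L\<lparr>carrier := carrier L - {m}\<rparr>) x y"
  show "upper_covers L x y"
  proof (rule ccontr)
    assume "\<not> upper_covers L x y"
    then have "y \<sqsubset> m" "m \<sqsubset> x"
      using cover by (auto simp: upper_covers_def lless_def)
    then have "y \<sqsubset> m'" "m' \<sqsubset> x"
      using x y upper_cover_le m_less_m' m_in_carrier m'_in_carrier
      by (auto simp: lless_eq intro: le_trans)
    then show False
      using cover m'_in_carrier not_m'_le_m by (auto simp: upper_covers_def lless_def)
  qed
qed (use x y in \<open>auto simp: upper_covers_def lless_def\<close>)

lemma join_irreducible_remove:
  assumes j: "join_irreducible (L\<lparr>carrier := carrier L - {m}\<rparr>) j" and "j \<noteq> m'"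
  shows "join_irreducible L j"
proof -
  have "\<not> upper_covers L j m"
    using upper_cover_le[of j] m_less_m' m'_in_carrier \<open>j \<noteq> m'\<close>
    by (auto simp: upper_covers_def lless_eq)
  then have "{y \<in> carrier L. upper_covers L j y} =
      {y \<in> carrier L - {m}. upper_covers (L\<lparr>carrier := carrier L - {m}\<rparr>) j y}"
    using j upper_covers_remove_iff[of j] \<open>j \<noteq> m'\<close>
    by (auto simp: join_irreducible_def upper_covers_def)
  then show ?thesis
    using j by (simp add: join_irreducible_def)
qed

lemma finite_partial_order_remove: "finite_partial_order (L\<lparr>carrier := carrier L - {m}\<rparr>)"
  using lattice_remove finite_carrier
  by (simp add: finite_partial_order_def finite_partial_order_axioms_def lattice_def upper_semilattice_def)

lemma lower_cover_m_le_lower_cover_m':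
  assumes irreducible: "join_irreducible (L\<lparr>carrier := carrier L - {m}\<rparr>) m'"
    and c: "upper_covers L m' c" "c \<noteq> m" and y: "upper_covers L m y"
  shows "y \<sqsubseteq> c"
proof -
  let ?S = "L\<lparr>carrier := carrier L - {m}\<rparr>"
  interpret S: finite_partial_order ?S by (rule finite_partial_order_remove)
  have "upper_covers ?S m' c"
    using c m_less_m' by (auto simp: upper_covers_def lless_eq)
  then have unique: "w = c" if "upper_covers ?S m' w" for w
    using irreducible that unfolding join_irreducible_def
    by (metis (mono_tags, lifting) card_1_singletonE mem_Collect_eq singletonD upper_covers_def)
  have "y \<sqsubset> m'"
    using y m_less_m' m'_in_carrier by (auto simp: upper_covers_def lless_eq intro: le_trans)
  then obtain w where "upper_covers ?S m' w" "y \<sqsubseteq> w"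
    using S.exists_lower_cover[of y m'] y m'_in_carrier not_m'_le_m
    by (auto simp: upper_covers_def lless_def)
  with unique show ?thesis by blast
qed

lemma join_irreducible_m_if_m'_reducible:
  assumes irreducible: "join_irreducible (L\<lparr>carrier := carrier L - {m}\<rparr>) m'"
    and reducible: "\<not> join_irreducible L m'"
  shows "join_irreducible L m"
proof -
  let ?covered = "\<lambda>x. {y \<in> carrier L. upper_covers L x y}"
  have "m \<in> ?covered m'"
    using upper_cover m_in_carrier by simp
  moreover have "?covered m' \<noteq> {m}"
    using reducible m'_in_carrier by (auto simp: join_irreducible_def)
  ultimately have "\<exists>c. upper_covers L m' c \<and> c \<noteq> m" by blast
  then obtain c where c: "upper_covers L m' c" "c \<noteq> m" by blast
  have "\<not> m \<sqsubseteq> c"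
    using c upper_cover m_in_carrier by (auto simp: upper_covers_def lless_eq)
  then have "m \<sqinter> c \<sqsubset> m"
    using c m_in_carrier meet_left[of m c] meet_right[of m c] by (auto simp: upper_covers_def lless_eq)
  then obtain y where y: "upper_covers L m y"
    using exists_lower_cover[of "m \<sqinter> c" m] c m_in_carrier by (auto simp: upper_covers_def)
  have unique: "y' = y" if y': "upper_covers L m y'" for y'
  proof (rule ccontr)
    assume "y' \<noteq> y"
    have in_carrier: "y \<in> carrier L" "y' \<in> carrier L" and below: "y \<sqsubseteq> m" "y' \<sqsubseteq> m"
      using y y' by (auto simp: upper_covers_def lless_eq)
    have "y \<squnion> y' \<noteq> y"
    proof
      assume "y \<squnion> y' = y"
      then have "y' \<sqsubset> y"
        using join_right[of y y'] in_carrier \<open>y' \<noteq> y\<close> by (simp add: lless_eq)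
      then show False
        using y y' by (auto simp: upper_covers_def)
    qed
    then have "y \<squnion> y' = m"
      using y in_carrier join_left[of y y'] join_le[OF below in_carrier m_in_carrier]
      by (auto simp: upper_covers_def lless_eq)
    moreover have "y \<squnion> y' \<sqsubseteq> c"
      using lower_cover_m_le_lower_cover_m'[OF irreducible c] y y' in_carrier c
      by (intro join_le) (auto simp: upper_covers_def)
    ultimately show False using \<open>\<not> m \<sqsubseteq> c\<close> by simp
  qed
  have "y \<in> carrier L"
    using y by (simp add: upper_covers_def)
  with y unique have "?covered m = {y}" by blast
  then show ?thesis using m_in_carrier by (simp add: join_irreducible_def)
qed

lemma card_gt_2_if_counterexample:
  assumes "counterexample L"
  shows "2 < card (carrier L)"
proof (rule ccontr)
  assume "\<not> 2 < card (carrier L)"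
  then have "card (carrier L) = 2"
    using assms by (simp add: counterexample_def)
  then have carrier: "carrier L = {m, m'}"
    using m_less_m' m_in_carrier m'_in_carrier finite_carrier
    by (intro card_subset_eq[symmetric]) (auto simp: lless_eq)
  then have "{y \<in> carrier L. upper_covers L m' y} = {m}" and "up_set L m' = {m'}"
    using upper_cover not_m'_le_m m'_in_carrier by (auto simp: upper_covers_def up_set_def)
  then show False
    using assms m'_in_carrier \<open>card (carrier L) = 2\<close> by (auto simp: counterexample_def join_irreducible_def)
qed

lemma join_irreducible_remove_small:
  assumes ce: "counterexample L" and not_ce: "\<not> counterexample (L\<lparr>carrier := carrier L - {m}\<rparr>)"
  obtains j where "join_irreducible (L\<lparr>carrier := carrier L - {m}\<rparr>) j"
    and "2 * card (up_set L j - {m}) < card (carrier L)"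
proof -
  let ?S = "L\<lparr>carrier := carrier L - {m}\<rparr>"
  have card_S: "card (carrier ?S) = card (carrier L) - 1"
    using m_in_carrier finite_carrier by simp
  have "lattice ?S" "finite (carrier ?S)" "1 < card (carrier ?S)"
    using lattice_remove finite_carrier card_S card_gt_2_if_counterexample[OF ce] by simp_all
  with not_ce obtain j where j: "join_irreducible ?S j"
    and "\<not> real (card (carrier ?S)) / 2 < real (card (up_set ?S j))"
    unfolding counterexample_def by blast
  then have "2 * card (up_set ?S j) \<le> card (carrier ?S)"
    by linarith
  moreover have "up_set ?S j = up_set L j - {m}"
    by (auto simp: up_set_def)
  ultimately have "2 * card (up_set L j - {m}) < card (carrier L)"
    using card_S card_gt_2_if_counterexample[OF ce] by simp
  with j show ?thesis by (rule that)
qed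

lemma exists_join_irreducible_below_m:
  assumes ce: "counterexample L" and not_ce: "\<not> counterexample (L\<lparr>carrier := carrier L - {m}\<rparr>)"
  shows "\<exists>j. join_irreducible L j \<and> j \<sqsubseteq> m \<and>
           real (card (up_set L j)) = (real (card (carrier L)) + 1) / 2"
proof -
  obtain j where j: "join_irreducible (L\<lparr>carrier := carrier L - {m}\<rparr>) j"
    and small: "2 * card (up_set L j - {m}) < card (carrier L)"
    using join_irreducible_remove_small[OF ce not_ce] .
  show ?thesis
  proof (cases "j = m'")
    case False
    then have "join_irreducible L j"
      using j join_irreducible_remove by blast
    with counterexample_up_set_card_eq[OF ce this small] show ?thesis by blast
  next
    case True
    with small have small_m': "2 * card (up_set L m' - {m}) < card (carrier L)"
      by simp
    then have "\<not> join_irreducible L m'"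
      using counterexample_up_set_card_eq[OF ce] not_m'_le_m by blast
    then have irreducible_m: "join_irreducible L m"
      using j True join_irreducible_m_if_m'_reducible by simp
    have "2 * card (up_set L m - {m}) < card (carrier L)"
      using small_m' up_set_m by simp
    with irreducible_m show ?thesis
      using counterexample_up_set_card_eq[OF ce] by blast
  qed
qed

end

theorem theorem2p12:
  fixes L :: "'a gorder" and m :: 'a
  assumes "min_counterexample L"
    and "meet_irreducible L m"
  shows "\<exists>j. join_irreducible L j \<and> j \<sqsubseteq>\<^bsub>L\<^esub> m \<and>
           real (card (up_set L j)) = (real (card (carrier L)) + 1) / 2"
proof -
  have ce: "counterexample L"
    using assms(1) by (simp add: min_counterexample_def)
  interpret lattice L
    using ce by (simp add: counterexample_def)
  interpret finite_partial_order L
    using ce by unfold_locales (simp add: counterexample_def)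
  obtain m' where "upper_covers L m' m"
    and "\<And>y. y \<in> carrier L \<Longrightarrow> m \<sqsubset>\<^bsub>L\<^esub> y \<Longrightarrow> m' \<sqsubseteq>\<^bsub>L\<^esub> y"
    using meet_irreducible_upper_cover assms(2) by blast
  then interpret meet_irreducible_element L m m'
    by unfold_locales
  have "\<not> counterexample (L\<lparr>carrier := carrier L - {m}\<rparr>)"
  proof
    assume "counterexample (L\<lparr>carrier := carrier L - {m}\<rparr>)"
    with min_counterexample_card_le[OF assms(1)]
    have "card (carrier L) \<le> card (carrier L - {m})" by force
    with card_Diff1_less[OF finite_carrier m_in_carrier] show False by simp
  qed
  with ce show ?thesis
    by (rule exists_join_irreducible_below_m)
qed

end
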